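(* Let $\mathcal{R}$ be a left-connected rewriting system over a signature $\Sigma$, let $L_1$ and $L_2$ be the left-hand sides of two rules of $\mathcal{R}$, and let $(g_1,g_2\colon G\to L_1+L_2)$ be a gluing scheme yielding a pre-critical pair, with gluing $\epsilon\colon L_1+L_2\twoheadrightarrow S=\mathtt{coeq}(g_1,g_2)$ and interface $in(S)+out(S)\xrightarrow{[\subseteq,\subseteq]}S$. This pre-critical pair is a critical pair if and only if some hyperedge of $L_1$ is glued to some hyperedge of $L_2$.
   Context: A signature $\Sigma$ is a set of triples $(x,n,m)$ (label, arity, coarity). A $\Sigma$-hypergraph $G=(V,E,s,t,l)$ has finite sets $V$ (nodes), $E$ (hyperedges), maps $s,t\colon E\to V^*$ (lists of sources/targets) and a labelling $l\colon E\to\Sigma$ sending a hyperedge with $n$ sources and $m$ targets to some $(x,n,m)$. Morphisms preserve sources, targets and labels; they form the category $\mathbf{Hyp}_\Sigma$, where colimits are computed componentwise and monos/epis are injective/surjective on nodes and hyperedges. Composition is written $f;g$; $\iota_1,\iota_2$ are coprojections. A hypergraph is discrete if it has no hyperedges. A path is a list of hyperedges $[e_1,\dots,e_n]$ with some target of $e_k$ equal to a source of $e_{k+1}$ for each $k$; it goes from $v$ to $v'$ if $v$ is a source of $e_1$ and $v'$ a target of $e_n$; a cycle is a path with some source of $e_1$ a target of $e_n$. In-degree (out-degree) of a node $v$: number of pairs $(e,i)$ with $v$ the $i$-th target (source) of $e$; $in(H)$, $out(H)$: nodes of in-degree $0$, out-degree $0$. $H$ is ma (monogamous acyclic) if it has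 no cycle and all in- and out-degrees are $\le 1$. A cospan $I\to H\leftarrow O$ with $I,O$ discrete is an ma-cospan if $H$ is ma and the legs are mono with images $in(H)$ and $out(H)$. $H$ is strongly connected if for all $x\in in(H)$, $y\in out(H)$ there is a path from $x$ to $y$. A left-connected rule is a span $L\xleftarrow{[i_L,o_L]}K=I+O\xrightarrow{[i_R,o_R]}R$ with $I,O$ discrete, $I\to L\leftarrow O$ and $I\to R\leftarrow O$ ma-cospans, $[i_L,o_L]$ mono and $L$ strongly connected; a left-connected rewriting system is a finite set of such rules. A convex match is a mono $m\colon L\to G$ such that every path in $G$ between two nodes of $m(L)$ has all its hyperedges in $m(L)$. A derivation between ma-cospans $n\to G\leftarrow m$ and $n\to H\leftarrow m$ via a rule $L\leftarrow K\to R$ is given by a convex match $L\to G$, a hypergraph $C$ and a diagram $G\leftarrow C\to H$, $K\to C$, $R\to H$, $n+m\to C$ in which $K,L,C,G$ and $K,R,C,H$ are pushout squares (the left one a boundary complement, automatic for left-connected systems) and everything commutes with the interfaces; for left-connected systems mono matches are automatically convex and pushout complements exist uniquely. A pre-critical pair consists of two derivations, via rules $L_1\leftarrow K_1\to R_1$ and $L_2\leftarrow K_2\to R_2$ with pushout complements $C_1,C_2$, from a common ma-cospan $n\to S\leftarrow m$ with matches $m_1,m_2$ such that $[m_1,m_2]\colon L_1+L_2\to S$ is epi. It is parallel if there exist $g_1\colon L_1\to C_2$ and $g_2\colon L_2\to C_1$ with $g_1$ followed by $C_2\to S$ equal to $m_1$ and $g_2$ followed by $C_1\to S$ equal to $m_2$;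 it is a critical pair if it is not parallel. A gluing scheme for $L_1,L_2$ is a $\Sigma$-hypergraph $G$ with morphisms $g_1,g_2\colon G\to L_1+L_2$; its gluing is the coequaliser $\epsilon\colon L_1+L_2\to S=\mathtt{coeq}(g_1,g_2)$. Two nodes (or hyperedges) $x,x'$ of $L_1+L_2$ are glued if some node (hyperedge) $y$ of $G$ has $g_1(y)=x$, $g_2(y)=x'$. The gluing scheme yields a pre-critical pair if $\iota_1;\epsilon$ and $\iota_2;\epsilon$ are mono and $in(S)\xrightarrow{\subseteq}S\xleftarrow{\subseteq}out(S)$ is an ma-cospan; the pre-critical pair is then formed by the (unique) derivations from this ma-cospan with matches $\iota_1;\epsilon$ and $\iota_2;\epsilon$. *)

theory Defs
  imports Main
begin

(* Nodes and hyperedges are taken from nat (every finite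
   hypergraph is isomorphic to one of this form, and every notion below is
   invariant under isomorphism).  Labels have an arbitrary type 'x; a signature
   is a set of triples (label, arity, coarity). *)
record 'x hg =
  hV :: "nat set"
  hE :: "nat set"
  hs :: "nat \<Rightarrow> nat list"
  ht :: "nat \<Rightarrow> nat list"
  hl :: "nat \<Rightarrow> 'x"

type_synonym 'x signature = "('x \<times> nat \<times> nat) set"

definition hypergraph :: "'x signature \<Rightarrow> 'x hg \<Rightarrow> bool" where
  "hypergraph \<Sigma> G \<longleftrightarrow> finite (hV G) \<and> finite (hE G) \<and>
     (\<forall>e\<in>hE G. set (hs G e) \<subseteq> hV G \<and> set (ht G e) \<subseteq> hV G \<and>
        (hl G e, length (hs G e), length (ht G e)) \<in> \<Sigma>)"

(* a morphism is a pair (map on nodes, map on hyperedges) *)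
type_synonym hom = "(nat \<Rightarrow> nat) \<times> (nat \<Rightarrow> nat)"

definition is_hom :: "'x signature \<Rightarrow> 'x hg \<Rightarrow> 'x hg \<Rightarrow> hom \<Rightarrow> bool" where
  "is_hom \<Sigma> G H f \<longleftrightarrow> hypergraph \<Sigma> G \<and> hypergraph \<Sigma> H \<and>
     fst f ` hV G \<subseteq> hV H \<and> snd f ` hE G \<subseteq> hE H \<and>
     (\<forall>e\<in>hE G. hs H (snd f e) = map (fst f) (hs G e) \<and>
               ht H (snd f e) = map (fst f) (ht G e) \<and>
               hl H (snd f e) = hl G e)"

(* diagrammatic composition f;g *)
definition comp :: "hom \<Rightarrow> hom \<Rightarrow> hom" (infixl ";;" 70) where
  "f ;; g = (fst g \<circ> fst f, snd g \<circ> snd f)"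

definition hom_eq :: "'x hg \<Rightarrow> hom \<Rightarrow> hom \<Rightarrow> bool" where
  "hom_eq G f g \<longleftrightarrow> (\<forall>v\<in>hV G. fst f v = fst g v) \<and> (\<forall>e\<in>hE G. snd f e = snd g e)"

definition is_mono :: "'x signature \<Rightarrow> 'x hg \<Rightarrow> 'x hg \<Rightarrow> hom \<Rightarrow> bool" where
  "is_mono \<Sigma> G H f \<longleftrightarrow> is_hom \<Sigma> G H f \<and> inj_on (fst f) (hV G) \<and> inj_on (snd f) (hE G)"

definition is_epi :: "'x signature \<Rightarrow> 'x hg \<Rightarrow> 'x hg \<Rightarrow> hom \<Rightarrow> bool" where
  "is_epi \<Sigma> G H f \<longleftrightarrow> is_hom \<Sigma> G H f \<and> fst f ` hV G = hV H \<and> snd f ` hE G = hE H"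

definition is_coproduct ::
  "'x signature \<Rightarrow> 'x hg \<Rightarrow> 'x hg \<Rightarrow> 'x hg \<Rightarrow> hom \<Rightarrow> hom \<Rightarrow> bool" where
  "is_coproduct \<Sigma> A B P i1 i2 \<longleftrightarrow> is_hom \<Sigma> A P i1 \<and> is_hom \<Sigma> B P i2 \<and>
     (\<forall>X f g. is_hom \<Sigma> A X f \<and> is_hom \<Sigma> B X g \<longrightarrow>
        (\<exists>h. is_hom \<Sigma> P X h \<and> hom_eq A (i1 ;; h) f \<and> hom_eq B (i2 ;; h) g \<and>
           (\<forall>h'. is_hom \<Sigma> P X h' \<and> hom_eq A (i1 ;; h') f \<and> hom_eq B (i2 ;; h') g
                 \<longrightarrow> hom_eq P h h')))"

definition is_coequaliser ::
  "'x signature \<Rightarrow> 'x hg \<Rightarrow> 'x hg \<Rightarrow> hom \<Rightarrow> hom \<Rightarrow> 'x hg \<Rightarrow> hom \<Rightarrow> bool" where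
  "is_coequaliser \<Sigma> G A f1 f2 Q q \<longleftrightarrow> is_hom \<Sigma> G A f1 \<and> is_hom \<Sigma> G A f2 \<and>
     is_hom \<Sigma> A Q q \<and> hom_eq G (f1 ;; q) (f2 ;; q) \<and>
     (\<forall>X x. is_hom \<Sigma> A X x \<and> hom_eq G (f1 ;; x) (f2 ;; x) \<longrightarrow>
        (\<exists>h. is_hom \<Sigma> Q X h \<and> hom_eq A (q ;; h) x \<and>
           (\<forall>h'. is_hom \<Sigma> Q X h' \<and> hom_eq A (q ;; h') x \<longrightarrow> hom_eq Q h h')))"

definition is_pushout ::
  "'x signature \<Rightarrow> 'x hg \<Rightarrow> 'x hg \<Rightarrow> 'x hg \<Rightarrow> 'x hg \<Rightarrow> hom \<Rightarrow> hom \<Rightarrow> hom \<Rightarrow> hom \<Rightarrow> bool" where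
  "is_pushout \<Sigma> K B C P f g f' g' \<longleftrightarrow>
     is_hom \<Sigma> K B f \<and> is_hom \<Sigma> K C g \<and> is_hom \<Sigma> B P f' \<and> is_hom \<Sigma> C P g' \<and>
     hom_eq K (f ;; f') (g ;; g') \<and>
     (\<forall>X x y. is_hom \<Sigma> B X x \<and> is_hom \<Sigma> C X y \<and> hom_eq K (f ;; x) (g ;; y) \<longrightarrow>
        (\<exists>h. is_hom \<Sigma> P X h \<and> hom_eq B (f' ;; h) x \<and> hom_eq C (g' ;; h) y \<and>
           (\<forall>h'. is_hom \<Sigma> P X h' \<and> hom_eq B (f' ;; h') x \<and> hom_eq C (g' ;; h') y
                 \<longrightarrow> hom_eq P h h')))"

definition discrete :: "'x hg \<Rightarrow> bool" where
  "discrete G \<longleftrightarrow> hE G = {}"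

definition is_path :: "'x hg \<Rightarrow> nat list \<Rightarrow> bool" where
  "is_path G p \<longleftrightarrow> set p \<subseteq> hE G \<and>
     (\<forall>k. Suc k < length p \<longrightarrow> set (ht G (p ! k)) \<inter> set (hs G (p ! Suc k)) \<noteq> {})"

definition path_from_to :: "'x hg \<Rightarrow> nat list \<Rightarrow> nat \<Rightarrow> nat \<Rightarrow> bool" where
  "path_from_to G p v v' \<longleftrightarrow> is_path G p \<and> p \<noteq> [] \<and>
     v \<in> set (hs G (hd p)) \<and> v' \<in> set (ht G (last p))"

definition is_cycle :: "'x hg \<Rightarrow> nat list \<Rightarrow> bool" where
  "is_cycle G p \<longleftrightarrow> is_path G p \<and> p \<noteq> [] \<and>
     set (hs G (hd p)) \<inter> set (ht G (last p)) \<noteq> {}"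

definition in_degree :: "'x hg \<Rightarrow> nat \<Rightarrow> nat" where
  "in_degree G v = card {(e, i). e \<in> hE G \<and> i < length (ht G e) \<and> ht G e ! i = v}"

definition out_degree :: "'x hg \<Rightarrow> nat \<Rightarrow> nat" where
  "out_degree G v = card {(e, i). e \<in> hE G \<and> i < length (hs G e) \<and> hs G e ! i = v}"

definition in_nodes :: "'x hg \<Rightarrow> nat set" where
  "in_nodes G = {v \<in> hV G. in_degree G v = 0}"

definition out_nodes :: "'x hg \<Rightarrow> nat set" where
  "out_nodes G = {v \<in> hV G. out_degree G v = 0}"

definition is_ma :: "'x hg \<Rightarrow> bool" where
  "is_ma G \<longleftrightarrow> (\<nexists>p. is_cycle G p) \<and>
     (\<forall>v\<in>hV G. in_degree G v \<le> 1 \<and> out_degree G v \<le> 1)"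

definition ma_cospan :: "'x signature \<Rightarrow> 'x hg \<Rightarrow> 'x hg \<Rightarrow> 'x hg \<Rightarrow> hom \<Rightarrow> hom \<Rightarrow> bool" where
  "ma_cospan \<Sigma> I H J a b \<longleftrightarrow> discrete I \<and> discrete J \<and> is_ma H \<and>
     is_mono \<Sigma> I H a \<and> is_mono \<Sigma> J H b \<and>
     fst a ` hV I = in_nodes H \<and> fst b ` hV J = out_nodes H"

definition strongly_connected :: "'x hg \<Rightarrow> bool" where
  "strongly_connected H \<longleftrightarrow>
     (\<forall>x\<in>in_nodes H. \<forall>y\<in>out_nodes H. \<exists>p. path_from_to H p x y)"

(* A rule  L <-kL- K -kR-> R  with K = I + O (coprojections jI, jO);
   i_L = jI;kL, o_L = jO;kL, i_R = jI;kR, o_R = jO;kR. *)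
record 'x rule =
  rI :: "'x hg"
  rO :: "'x hg"
  rK :: "'x hg"
  rjI :: hom
  rjO :: hom
  rL :: "'x hg"
  rkL :: hom
  rR :: "'x hg"
  rkR :: hom

definition left_connected_rule :: "'x signature \<Rightarrow> 'x rule \<Rightarrow> bool" where
  "left_connected_rule \<Sigma> \<rho> \<longleftrightarrow>
     discrete (rI \<rho>) \<and> discrete (rO \<rho>) \<and>
     is_coproduct \<Sigma> (rI \<rho>) (rO \<rho>) (rK \<rho>) (rjI \<rho>) (rjO \<rho>) \<and>
     is_hom \<Sigma> (rK \<rho>) (rL \<rho>) (rkL \<rho>) \<and> is_hom \<Sigma> (rK \<rho>) (rR \<rho>) (rkR \<rho>) \<and>
     ma_cospan \<Sigma> (rI \<rho>) (rL \<rho>) (rO \<rho>) (rjI \<rho> ;; rkL \<rho>) (rjO \<rho> ;; rkL \<rho>) \<and>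
     ma_cospan \<Sigma> (rI \<rho>) (rR \<rho>) (rO \<rho>) (rjI \<rho> ;; rkR \<rho>) (rjO \<rho> ;; rkR \<rho>) \<and>
     is_mono \<Sigma> (rK \<rho>) (rL \<rho>) (rkL \<rho>) \<and>
     strongly_connected (rL \<rho>)"

definition left_connected_system :: "'x signature \<Rightarrow> 'x rule set \<Rightarrow> bool" where
  "left_connected_system \<Sigma> \<R> \<longleftrightarrow> finite \<R> \<and> (\<forall>\<rho>\<in>\<R>. left_connected_rule \<Sigma> \<rho>)"

definition convex_match :: "'x signature \<Rightarrow> 'x hg \<Rightarrow> 'x hg \<Rightarrow> hom \<Rightarrow> bool" where
  "convex_match \<Sigma> L G m \<longleftrightarrow> is_mono \<Sigma> L G m \<and>
     (\<forall>p v v'. v \<in> fst m ` hV L \<and> v' \<in> fst m ` hV L \<and> path_from_to G p v v'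
        \<longrightarrow> set p \<subseteq> snd m ` hE L)"

(* A derivation between the ma-cospans  N -aG-> G <-bG- M  and  N -aH-> H <-bH- M
   via rule rho, with match m : L \<rightarrow> G, pushout complement C and c : C \<rightarrow> G. *)
definition derivation ::
  "'x signature \<Rightarrow> 'x rule \<Rightarrow> 'x hg \<Rightarrow> 'x hg \<Rightarrow> 'x hg \<Rightarrow> hom \<Rightarrow> hom \<Rightarrow>
   'x hg \<Rightarrow> hom \<Rightarrow> hom \<Rightarrow> hom \<Rightarrow> 'x hg \<Rightarrow> hom \<Rightarrow> bool" where
  "derivation \<Sigma> \<rho> N M G aG bG H aH bH m C c \<longleftrightarrow>
     ma_cospan \<Sigma> N G M aG bG \<and> ma_cospan \<Sigma> N H M aH bH \<and>
     convex_match \<Sigma> (rL \<rho>) G m \<and>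
     (\<exists>k h r NM qN qM d.
        is_pushout \<Sigma> (rK \<rho>) (rL \<rho>) C G (rkL \<rho>) k m c \<and>
        is_pushout \<Sigma> (rK \<rho>) (rR \<rho>) C H (rkR \<rho>) k r h \<and>
        is_coproduct \<Sigma> N M NM qN qM \<and> is_hom \<Sigma> NM C d \<and>
        hom_eq N (qN ;; d ;; c) aG \<and> hom_eq M (qM ;; d ;; c) bG \<and>
        hom_eq N (qN ;; d ;; h) aH \<and> hom_eq M (qM ;; d ;; h) bH)"

definition discrete_on :: "nat set \<Rightarrow> 'x hg \<Rightarrow> 'x hg" where
  "discrete_on X G = \<lparr>hV = X, hE = {}, hs = hs G, ht = ht G, hl = hl G\<rparr>"

definition incl :: hom where
  "incl = (id, id)"

definition parallel ::
  "'x signature \<Rightarrow> 'x hg \<Rightarrow> hom \<Rightarrow> 'x hg \<Rightarrow> hom \<Rightarrow> 'x hg \<Rightarrow> hom \<Rightarrow> 'x hg \<Rightarrow> hom \<Rightarrow> bool" where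
  "parallel \<Sigma> L1 m1 C1 c1 L2 m2 C2 c2 \<longleftrightarrow>
     (\<exists>h1. is_hom \<Sigma> L1 C2 h1 \<and> hom_eq L1 (h1 ;; c2) m1) \<and>
     (\<exists>h2. is_hom \<Sigma> L2 C1 h2 \<and> hom_eq L2 (h2 ;; c1) m2)"

definition glued_edge :: "'x hg \<Rightarrow> hom \<Rightarrow> hom \<Rightarrow> nat \<Rightarrow> nat \<Rightarrow> bool" where
  "glued_edge G g1 g2 x x' \<longleftrightarrow> (\<exists>y\<in>hE G. snd g1 y = x \<and> snd g2 y = x')"

end

theory Submission
  imports Defs
begin

text \<open>
  Both sides are equivalent to the two matches sharing a hyperedge of \<open>S\<close>.
  A pushout along a discrete interface is edge-disjoint on its two legs, so a hyperedge in both
  matches cannot factor through either pushout complement. Conversely, if the matches share no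
  hyperedge, a node of \<open>m\<^sub>1(L\<^sub>1)\<close> outside the complement \<open>C\<^sub>2\<close> would come from an interior node
  of \<open>L\<^sub>2\<close>, which has an incoming and an outgoing hyperedge in \<open>L\<^sub>2\<close>; as \<open>L\<^sub>1\<close> is strongly
  connected the node also has one in \<open>L\<^sub>1\<close>, so its image in \<open>S\<close> has in- or out-degree \<open>2\<close>,
  contradicting monogamy. Since \<open>C\<^sub>2 \<rightarrow> S\<close> is injective, \<open>m\<^sub>1\<close> then factors through it.
  Finally, if no hyperedge of \<open>L\<^sub>1\<close> is glued to one of \<open>L\<^sub>2\<close>, the two legs of the gluing scheme
  agree on hyperedges (by injectivity of the matches), so the coequaliser is injective on
  hyperedges and the matches cannot share one.
\<close>

lemma is_hom_comp:
  assumes "is_hom \<Sigma> A B f" "is_hom \<Sigma> B C g"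
  shows "is_hom \<Sigma> A C (f ;; g)"
  using assms unfolding is_hom_def comp_def by (auto simp: image_subset_iff)

lemma
  assumes "is_hom \<Sigma> A B f"
  shows is_hom_hypergraph_dom: "hypergraph \<Sigma> A"
    and is_hom_hypergraph_cod: "hypergraph \<Sigma> B"
    and is_hom_node: "v \<in> hV A \<Longrightarrow> fst f v \<in> hV B"
    and is_hom_edge: "e \<in> hE A \<Longrightarrow> snd f e \<in> hE B"
    and is_hom_sources: "e \<in> hE A \<Longrightarrow> hs B (snd f e) = map (fst f) (hs A e)"
    and is_hom_targets: "e \<in> hE A \<Longrightarrow> ht B (snd f e) = map (fst f) (ht A e)"
    and is_hom_label: "e \<in> hE A \<Longrightarrow> hl B (snd f e) = hl A e"
  using assms unfolding is_hom_def by blast+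

lemma
  assumes "hypergraph \<Sigma> G" "e \<in> hE G"
  shows hypergraph_sources: "set (hs G e) \<subseteq> hV G"
    and hypergraph_targets: "set (ht G e) \<subseteq> hV G"
  using assms unfolding hypergraph_def by blast+

lemma pushout_homs_eq:
  assumes po: "is_pushout \<Sigma> K L C S f g m c"
    and h: "is_hom \<Sigma> S X h" and h': "is_hom \<Sigma> S X h'"
    and "hom_eq L (m ;; h) (m ;; h')" "hom_eq C (c ;; h) (c ;; h')"
  shows "hom_eq S h h'"
proof -
  have m: "is_hom \<Sigma> L S m" and c: "is_hom \<Sigma> C S c" and comm: "hom_eq K (f ;; m) (g ;; c)"
    and f: "is_hom \<Sigma> K L f" and g: "is_hom \<Sigma> K C g"
    using po unfolding is_pushout_def by blast+
  have "hom_eq K (f ;; (m ;; h)) (g ;; (c ;; h))"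
    using comm is_hom_node[OF f] is_hom_node[OF g] is_hom_edge[OF f] is_hom_edge[OF g]
    unfolding hom_eq_def comp_def by auto
  then obtain h0 where
    unique: "\<And>h''. is_hom \<Sigma> S X h'' \<Longrightarrow> hom_eq L (m ;; h'') (m ;; h) \<Longrightarrow>
                hom_eq C (c ;; h'') (c ;; h) \<Longrightarrow> hom_eq S h0 h''"
    using po is_hom_comp[OF m h] is_hom_comp[OF c h] unfolding is_pushout_def by blast
  have "hom_eq S h0 h" "hom_eq S h0 h'"
    using unique[OF h] unique[OF h'] assms(4,5) unfolding hom_eq_def by auto
  then show ?thesis unfolding hom_eq_def by auto
qed

text \<open>Two copies of \<open>S\<close>, on the even and the odd numbers, sharing the nodes in \<open>B\<close>.\<close>

definition second_copy :: "nat set \<Rightarrow> nat \<Rightarrow> nat" where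
  "second_copy B x = (if x \<in> B then 2 * x else 2 * x + 1)"

definition double_along :: "nat set \<Rightarrow> 'x hg \<Rightarrow> 'x hg" where
  "double_along B S =
    \<lparr>hV = (\<lambda>v. 2 * v) ` hV S \<union> (\<lambda>v. 2 * v + 1) ` hV S,
     hE = (\<lambda>e. 2 * e) ` hE S \<union> (\<lambda>e. 2 * e + 1) ` hE S,
     hs = (\<lambda>n. map (if even n then (\<lambda>v. 2 * v) else second_copy B) (hs S (n div 2))),
     ht = (\<lambda>n. map (if even n then (\<lambda>v. 2 * v) else second_copy B) (ht S (n div 2))),
     hl = (\<lambda>n. hl S (n div 2))\<rparr>"

lemma hypergraph_double_along:
  assumes "hypergraph \<Sigma> S"
  shows "hypergraph \<Sigma> (double_along B S)"
  using assms unfolding hypergraph_def double_along_def second_copy_def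
  by (fastforce simp: image_subset_iff subset_iff)

lemma determining_set_covers:
  assumes S: "hypergraph \<Sigma> S"
    and closed: "\<And>e. e \<in> A \<inter> hE S \<Longrightarrow> set (hs S e) \<subseteq> B \<and> set (ht S e) \<subseteq> B"
    and determined: "\<And>X h h'. is_hom \<Sigma> S X h \<Longrightarrow> is_hom \<Sigma> S X h' \<Longrightarrow>
        (\<forall>v\<in>B \<inter> hV S. fst h v = fst h' v) \<Longrightarrow> (\<forall>e\<in>A \<inter> hE S. snd h e = snd h' e) \<Longrightarrow>
        hom_eq S h h'"
  shows "hE S \<subseteq> A" "hV S \<subseteq> B"
proof -
  let ?X = "double_along B S"
  let ?h = "(\<lambda>v. 2 * v, \<lambda>e. 2 * e) :: hom"
  let ?h' = "(second_copy B, second_copy A)"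
  have X: "hypergraph \<Sigma> ?X" by (rule hypergraph_double_along[OF S])
  have map_second_copy: "map (second_copy B) xs = map (\<lambda>v. 2 * v) xs" if "set xs \<subseteq> B" for xs
    using that by (induction xs) (auto simp: second_copy_def)
  have "is_hom \<Sigma> S ?X ?h" using S X unfolding is_hom_def by (auto simp: double_along_def)
  moreover have "is_hom \<Sigma> S ?X ?h'"
    using S X closed unfolding is_hom_def
    by (auto simp: double_along_def second_copy_def map_second_copy)
  ultimately have "hom_eq S ?h ?h'"
    by (rule determined) (auto simp: second_copy_def)
  then show "hE S \<subseteq> A" "hV S \<subseteq> B"
    unfolding hom_eq_def second_copy_def by (auto split: if_splits)
qed

lemma pushout_jointly_surjective:
  assumes po: "is_pushout \<Sigma> K L C S f g m c"
  shows "hE S \<subseteq> snd m ` hE L \<union> snd c ` hE C" "hV S \<subseteq> fst m ` hV L \<union> fst c ` hV C"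
proof -
  have m: "is_hom \<Sigma> L S m" and c: "is_hom \<Sigma> C S c" using po unfolding is_pushout_def by blast+
  have closed: "set (hs S e) \<subseteq> fst m ` hV L \<union> fst c ` hV C \<and>
                 set (ht S e) \<subseteq> fst m ` hV L \<union> fst c ` hV C"
    if "e \<in> (snd m ` hE L \<union> snd c ` hE C) \<inter> hE S" for e
  proof -
    from that consider a where "a \<in> hE L" "e = snd m a" | b where "b \<in> hE C" "e = snd c b"
      by blast
    then show ?thesis
    proof cases
      case 1
      then show ?thesis
        using hypergraph_sources[OF is_hom_hypergraph_dom[OF m] 1(1)]
          hypergraph_targets[OF is_hom_hypergraph_dom[OF m] 1(1)]
        by (auto simp: is_hom_sources[OF m] is_hom_targets[OF m])
    next
      case 2
      then show ?thesis
        using hypergraph_sources[OF is_hom_hypergraph_dom[OF c] 2(1)]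
          hypergraph_targets[OF is_hom_hypergraph_dom[OF c] 2(1)]
        by (auto simp: is_hom_sources[OF c] is_hom_targets[OF c])
    qed
  qed
  have determined: "hom_eq S h h'"
    if h: "is_hom \<Sigma> S X h" and h': "is_hom \<Sigma> S X h'"
      and nodes: "\<forall>v\<in>(fst m ` hV L \<union> fst c ` hV C) \<inter> hV S. fst h v = fst h' v"
      and edges: "\<forall>e\<in>(snd m ` hE L \<union> snd c ` hE C) \<inter> hE S. snd h e = snd h' e"
    for X h h'
  proof (rule pushout_homs_eq[OF po h h'])
    show "hom_eq L (m ;; h) (m ;; h')"
      using nodes edges is_hom_node[OF m] is_hom_edge[OF m] unfolding hom_eq_def comp_def by simp
    show "hom_eq C (c ;; h) (c ;; h')"
      using nodes edges is_hom_node[OF c] is_hom_edge[OF c] unfolding hom_eq_def comp_def by simp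
  qed
  show "hE S \<subseteq> snd m ` hE L \<union> snd c ` hE C" "hV S \<subseteq> fst m ` hV L \<union> fst c ` hV C"
    by (rule determining_set_covers[OF is_hom_hypergraph_cod[OF m]]; fact closed determined)+
qed

definition empty_hg :: "'x hg" where
  "empty_hg = \<lparr>hV = {}, hE = {}, hs = (\<lambda>_. []), ht = (\<lambda>_. []), hl = (\<lambda>_. undefined)\<rparr>"

lemma is_hom_empty_hg: "hypergraph \<Sigma> A \<Longrightarrow> is_hom \<Sigma> empty_hg A f"
  unfolding is_hom_def hypergraph_def empty_hg_def by simp

lemma hom_eq_empty_hg: "hom_eq empty_hg f g"
  unfolding hom_eq_def empty_hg_def by simp

lemma coproduct_is_pushout:
  assumes "is_coproduct \<Sigma> A B P i1 i2"
  shows "is_pushout \<Sigma> empty_hg A B P f g i1 i2"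
proof -
  have "is_hom \<Sigma> A P i1" "is_hom \<Sigma> B P i2" using assms unfolding is_coproduct_def by blast+
  then have "is_hom \<Sigma> empty_hg A f" "is_hom \<Sigma> empty_hg B g"
    using is_hom_empty_hg is_hom_hypergraph_dom by blast+
  then show ?thesis
    using assms unfolding is_coproduct_def is_pushout_def by (simp add: hom_eq_empty_hg)
qed

text \<open>A cocone over \<open>f\<close> and \<open>g\<close> that is injective on \<open>C\<close> and keeps the hyperedges of \<open>L\<close>
  apart from those of \<open>C\<close>: \<open>C\<close> sits on the even numbers, the hyperedges of \<open>L\<close> on the odd ones,
  and all nodes of \<open>L\<close> outside the interface go to the node \<open>1\<close>.\<close>

definition separating_node :: "'x hg \<Rightarrow> hom \<Rightarrow> hom \<Rightarrow> nat \<Rightarrow> nat" where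
  "separating_node K f g u =
    (if u \<in> fst f ` hV K then 2 * fst g (inv_into (hV K) (fst f) u) else 1)"

definition separating_cocone :: "'x hg \<Rightarrow> 'x hg \<Rightarrow> 'x hg \<Rightarrow> hom \<Rightarrow> hom \<Rightarrow> 'x hg" where
  "separating_cocone K L C f g =
    \<lparr>hV = insert 1 ((\<lambda>v. 2 * v) ` hV C),
     hE = (\<lambda>e. 2 * e) ` hE C \<union> (\<lambda>e. 2 * e + 1) ` hE L,
     hs = (\<lambda>n. if even n then map (\<lambda>v. 2 * v) (hs C (n div 2))
               else map (separating_node K f g) (hs L (n div 2))),
     ht = (\<lambda>n. if even n then map (\<lambda>v. 2 * v) (ht C (n div 2))
               else map (separating_node K f g) (ht L (n div 2))),
     hl = (\<lambda>n. if even n then hl C (n div 2) else hl L (n div 2))\<rparr>"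

lemma separating_node_in:
  assumes "is_hom \<Sigma> K C g"
  shows "separating_node K f g u \<in> hV (separating_cocone K L C f g)"
proof (cases "u \<in> fst f ` hV K")
  case True
  then show ?thesis
    using is_hom_node[OF assms inv_into_into[OF True]]
    by (simp add: separating_node_def separating_cocone_def)
qed (simp add: separating_node_def separating_cocone_def)

lemma hypergraph_separating_cocone:
  assumes L: "hypergraph \<Sigma> L" and g: "is_hom \<Sigma> K C g"
  shows "hypergraph \<Sigma> (separating_cocone K L C f g)"
  using L is_hom_hypergraph_cod[OF g] separating_node_in[OF g, where f = f and L = L]
  unfolding hypergraph_def
  by (auto simp: separating_cocone_def image_subset_iff subset_iff)

lemma
  assumes L: "hypergraph \<Sigma> L" and g: "is_hom \<Sigma> K C g"
  shows is_hom_separating_cocone_left: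
      "is_hom \<Sigma> L (separating_cocone K L C f g) (separating_node K f g, \<lambda>e. 2 * e + 1)"
    and is_hom_separating_cocone_right:
      "is_hom \<Sigma> C (separating_cocone K L C f g) (\<lambda>v. 2 * v, \<lambda>e. 2 * e)"
  using L is_hom_hypergraph_cod[OF g] hypergraph_separating_cocone[OF L g]
    separating_node_in[OF g, where f = f and L = L]
  unfolding is_hom_def by (auto simp: separating_cocone_def)

lemma
  assumes po: "is_pushout \<Sigma> K L C S f g m c"
    and K: "hE K = {}" and f: "inj_on (fst f) (hV K)"
  shows pushout_discrete_mono_inj_on_nodes: "inj_on (fst c) (hV C)"
    and pushout_discrete_mono_edges_disjoint: "a \<in> hE L \<Longrightarrow> b \<in> hE C \<Longrightarrow> snd m a \<noteq> snd c b"
proof -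
  have f_hom: "is_hom \<Sigma> K L f" and g: "is_hom \<Sigma> K C g"
    using po unfolding is_pushout_def by blast+
  have L: "hypergraph \<Sigma> L" by (rule is_hom_hypergraph_cod[OF f_hom])
  have "hom_eq K (f ;; (separating_node K f g, \<lambda>e. 2 * e + 1)) (g ;; (\<lambda>v. 2 * v, \<lambda>e. 2 * e))"
    using K f unfolding hom_eq_def comp_def separating_node_def by auto
  then obtain h where
    "hom_eq L (m ;; h) (separating_node K f g, \<lambda>e. 2 * e + 1)"
    "hom_eq C (c ;; h) (\<lambda>v. 2 * v, \<lambda>e. 2 * e)"
    using po is_hom_separating_cocone_left[OF L g] is_hom_separating_cocone_right[OF L g]
    unfolding is_pushout_def by blast
  then have c_node: "\<And>v. v \<in> hV C \<Longrightarrow> fst h (fst c v) = 2 * v"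
    and c_edge: "\<And>e. e \<in> hE C \<Longrightarrow> snd h (snd c e) = 2 * e"
    and m_edge: "\<And>e. e \<in> hE L \<Longrightarrow> snd h (snd m e) = 2 * e + 1"
    unfolding hom_eq_def comp_def by auto
  show "inj_on (fst c) (hV C)"
    by (rule inj_on_inverseI[where g = "\<lambda>w. fst h w div 2"]) (simp add: c_node)
  show "snd m a \<noteq> snd c b" if "a \<in> hE L" "b \<in> hE C"
  proof
    assume "snd m a = snd c b"
    then have "2 * a + 1 = 2 * b" using m_edge[OF that(1)] c_edge[OF that(2)] by simp
    then show False by presburger
  qed
qed

lemma
  assumes "is_coproduct \<Sigma> A B P i1 i2"
  shows coproduct_jointly_surjective: "hE P \<subseteq> snd i1 ` hE A \<union> snd i2 ` hE B"
      "hV P \<subseteq> fst i1 ` hV A \<union> fst i2 ` hV B"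
    and coproduct_edges_disjoint: "a \<in> hE A \<Longrightarrow> b \<in> hE B \<Longrightarrow> snd i1 a \<noteq> snd i2 b"
  using pushout_jointly_surjective[OF coproduct_is_pushout[OF assms]]
    pushout_discrete_mono_edges_disjoint[OF coproduct_is_pushout[OF assms]]
  by (auto simp: empty_hg_def)

definition collapse_nodes :: "'x hg \<Rightarrow> 'x hg" where
  "collapse_nodes P =
    \<lparr>hV = {0}, hE = hE P, hs = (\<lambda>e. replicate (length (hs P e)) 0),
     ht = (\<lambda>e. replicate (length (ht P e)) 0), hl = hl P\<rparr>"

lemma is_hom_collapse_nodes:
  "hypergraph \<Sigma> P \<Longrightarrow> is_hom \<Sigma> P (collapse_nodes P) (\<lambda>_. 0, id)"
  unfolding is_hom_def hypergraph_def collapse_nodes_def by (auto simp: map_replicate_const)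

lemma coequaliser_inj_on_edges:
  assumes coeq: "is_coequaliser \<Sigma> G P g1 g2 S \<epsilon>"
    and agree: "\<And>y. y \<in> hE G \<Longrightarrow> snd g1 y = snd g2 y"
  shows "inj_on (snd \<epsilon>) (hE P)"
proof -
  have "is_hom \<Sigma> G P g1" using coeq unfolding is_coequaliser_def by blast
  then have "is_hom \<Sigma> P (collapse_nodes P) (\<lambda>_. 0, id)"
    by (rule is_hom_collapse_nodes[OF is_hom_hypergraph_cod])
  moreover have "hom_eq G (g1 ;; (\<lambda>_. 0, id)) (g2 ;; (\<lambda>_. 0, id))"
    using agree unfolding hom_eq_def comp_def by simp
  ultimately obtain h where "hom_eq P (\<epsilon> ;; h) (\<lambda>_. 0, id)"
    using coeq unfolding is_coequaliser_def by blast
  then have "\<forall>e\<in>hE P. snd h (snd \<epsilon> e) = e" unfolding hom_eq_def comp_def by simp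
  then show ?thesis by (metis inj_onI)
qed

lemma finite_occurrences:
  "finite E \<Longrightarrow> finite {(e, i). e \<in> E \<and> i < length (xs e) \<and> xs e ! i = v}"
  by (rule finite_subset[of _ "Sigma E (\<lambda>e. {..<length (xs e)})"]) auto

lemma card_occurrences_eq_0_iff:
  "finite E \<Longrightarrow>
    card {(e, i). e \<in> E \<and> i < length (xs e) \<and> xs e ! i = v} = 0 \<longleftrightarrow> (\<forall>e\<in>E. v \<notin> set (xs e))"
  using finite_occurrences[of E xs v] by (auto simp: in_set_conv_nth)

lemma two_le_card_occurrences:
  assumes "finite E" "e \<in> E" "e' \<in> E" "e \<noteq> e'" "v \<in> set (xs e)" "v \<in> set (xs e')"
  shows "2 \<le> card {(e, i). e \<in> E \<and> i < length (xs e) \<and> xs e ! i = v}"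
proof -
  obtain i j where "i < length (xs e)" "xs e ! i = v" "j < length (xs e')" "xs e' ! j = v"
    using assms(5,6) by (meson in_set_conv_nth)
  then show ?thesis
    using assms card_mono[OF finite_occurrences[OF assms(1)], of "{(e, i), (e', j)}" xs v] by auto
qed

lemma
  assumes "hypergraph \<Sigma> G"
  shows in_degree_eq_0_iff: "in_degree G v = 0 \<longleftrightarrow> (\<forall>e\<in>hE G. v \<notin> set (ht G e))"
    and out_degree_eq_0_iff: "out_degree G v = 0 \<longleftrightarrow> (\<forall>e\<in>hE G. v \<notin> set (hs G e))"
proof -
  have "finite (hE G)" using assms unfolding hypergraph_def by blast
  then show "in_degree G v = 0 \<longleftrightarrow> (\<forall>e\<in>hE G. v \<notin> set (ht G e))"
    and "out_degree G v = 0 \<longleftrightarrow> (\<forall>e\<in>hE G. v \<notin> set (hs G e))"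
    unfolding in_degree_def out_degree_def by (rule card_occurrences_eq_0_iff)+
qed

lemma
  assumes "hypergraph \<Sigma> G" "e \<in> hE G" "e' \<in> hE G" "e \<noteq> e'"
  shows two_le_in_degree: "v \<in> set (ht G e) \<Longrightarrow> v \<in> set (ht G e') \<Longrightarrow> 2 \<le> in_degree G v"
    and two_le_out_degree: "v \<in> set (hs G e) \<Longrightarrow> v \<in> set (hs G e') \<Longrightarrow> 2 \<le> out_degree G v"
proof -
  have "finite (hE G)" using assms(1) unfolding hypergraph_def by blast
  note two_le = two_le_card_occurrences[OF this assms(2-4)]
  show "v \<in> set (ht G e) \<Longrightarrow> v \<in> set (ht G e') \<Longrightarrow> 2 \<le> in_degree G v"
    unfolding in_degree_def by (rule two_le)
  show "v \<in> set (hs G e) \<Longrightarrow> v \<in> set (hs G e') \<Longrightarrow> 2 \<le> out_degree G v"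
    unfolding out_degree_def by (rule two_le)
qed

lemma strongly_connected_no_isolated_nodes:
  assumes L: "hypergraph \<Sigma> L" and sc: "strongly_connected L" and v: "v \<in> hV L"
  shows "in_degree L v \<noteq> 0 \<or> out_degree L v \<noteq> 0"
proof (rule ccontr)
  assume "\<not> ?thesis"
  then have "v \<in> in_nodes L" "v \<in> out_nodes L" "out_degree L v = 0"
    using v unfolding in_nodes_def out_nodes_def by auto
  moreover obtain p where "path_from_to L p v v"
    using sc \<open>v \<in> in_nodes L\<close> \<open>v \<in> out_nodes L\<close> unfolding strongly_connected_def by blast
  then have "hd p \<in> hE L" "v \<in> set (hs L (hd p))" unfolding path_from_to_def is_path_def by auto
  ultimately show False using out_degree_eq_0_iff[OF L] by blast
qed

lemma left_connected_rule_interface_discrete: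
  assumes "left_connected_rule \<Sigma> \<rho>"
  shows "hE (rK \<rho>) = {}"
proof -
  have "is_coproduct \<Sigma> (rI \<rho>) (rO \<rho>) (rK \<rho>) (rjI \<rho>) (rjO \<rho>)"
    and "hE (rI \<rho>) = {}" "hE (rO \<rho>) = {}"
    using assms unfolding left_connected_rule_def discrete_def by blast+
  from coproduct_jointly_surjective(1)[OF this(1)] this(2,3) show ?thesis by simp
qed

lemma left_connected_rule_interface_inj:
  "left_connected_rule \<Sigma> \<rho> \<Longrightarrow> inj_on (fst (rkL \<rho>)) (hV (rK \<rho>))"
  unfolding left_connected_rule_def is_mono_def by blast

lemma left_connected_rule_interior_degrees:
  assumes r: "left_connected_rule \<Sigma> \<rho>"
    and u: "u \<in> hV (rL \<rho>)" "u \<notin> fst (rkL \<rho>) ` hV (rK \<rho>)"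
  shows "in_degree (rL \<rho>) u \<noteq> 0 \<and> out_degree (rL \<rho>) u \<noteq> 0"
proof -
  have "is_coproduct \<Sigma> (rI \<rho>) (rO \<rho>) (rK \<rho>) (rjI \<rho>) (rjO \<rho>)"
    using r unfolding left_connected_rule_def by blast
  then have jI: "is_hom \<Sigma> (rI \<rho>) (rK \<rho>) (rjI \<rho>)" and jO: "is_hom \<Sigma> (rO \<rho>) (rK \<rho>) (rjO \<rho>)"
    unfolding is_coproduct_def by blast+
  have "in_nodes (rL \<rho>) = fst (rjI \<rho> ;; rkL \<rho>) ` hV (rI \<rho>)"
    "out_nodes (rL \<rho>) = fst (rjO \<rho> ;; rkL \<rho>) ` hV (rO \<rho>)"
    using r unfolding left_connected_rule_def ma_cospan_def by blast+
  then have "u \<notin> in_nodes (rL \<rho>)" "u \<notin> out_nodes (rL \<rho>)"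
    using u(2) is_hom_node[OF jI] is_hom_node[OF jO] by (auto simp: comp_def)
  then show ?thesis using u(1) unfolding in_nodes_def out_nodes_def by simp
qed

lemma map_eq_map_lift:
  assumes "inj_on c C" "set xs \<subseteq> C" "\<And>v. v \<in> set ys \<Longrightarrow> h v \<in> C \<and> c (h v) = m v"
    and "map c xs = map m ys"
  shows "xs = map h ys"
proof -
  have "map c xs = map c (map h ys)" using assms(3,4) by simp
  moreover have "set (map h ys) \<subseteq> C" using assms(3) by auto
  ultimately show ?thesis using map_inj_on[OF _ inj_on_subset[OF assms(1)]] assms(2) by blast
qed

lemma factor_through_node_injective:
  assumes c: "is_hom \<Sigma> C S c" and c_inj: "inj_on (fst c) (hV C)"
    and m: "is_hom \<Sigma> L S m"
    and nodes: "fst m ` hV L \<subseteq> fst c ` hV C" and edges: "snd m ` hE L \<subseteq> snd c ` hE C"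
  shows "\<exists>h. is_hom \<Sigma> L C h \<and> hom_eq L (h ;; c) m"
proof -
  define h where
    "h = (\<lambda>v. inv_into (hV C) (fst c) (fst m v), \<lambda>e. inv_into (hE C) (snd c) (snd m e))"
  have h_node: "fst h v \<in> hV C" "fst c (fst h v) = fst m v" if "v \<in> hV L" for v
  proof -
    have "fst m v \<in> fst c ` hV C" using nodes that by blast
    then show "fst h v \<in> hV C" "fst c (fst h v) = fst m v"
      unfolding h_def by (simp_all add: inv_into_into f_inv_into_f)
  qed
  have h_edge: "snd h e \<in> hE C" "snd c (snd h e) = snd m e" if "e \<in> hE L" for e
  proof -
    have "snd m e \<in> snd c ` hE C" using edges that by blast
    then show "snd h e \<in> hE C" "snd c (snd h e) = snd m e"
      unfolding h_def by (simp_all add: inv_into_into f_inv_into_f)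
  qed
  have lift: "xs = map (fst h) ys"
    if "set xs \<subseteq> hV C" "set ys \<subseteq> hV L" "map (fst c) xs = map (fst m) ys" for xs ys
    using map_eq_map_lift[OF c_inj that(1) _ that(3)] that(2) h_node by blast
  have C: "hypergraph \<Sigma> C" and L: "hypergraph \<Sigma> L"
    using c m by (blast intro: is_hom_hypergraph_dom)+
  have "is_hom \<Sigma> L C h"
    unfolding is_hom_def
  proof (intro conjI ballI)
    fix e assume e: "e \<in> hE L"
    show "hs C (snd h e) = map (fst h) (hs L e)"
      using lift hypergraph_sources[OF C h_edge(1)[OF e]] hypergraph_sources[OF L e]
        is_hom_sources[OF c h_edge(1)[OF e]] is_hom_sources[OF m e] h_edge(2)[OF e] by metis
    show "ht C (snd h e) = map (fst h) (ht L e)"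
      using lift hypergraph_targets[OF C h_edge(1)[OF e]] hypergraph_targets[OF L e]
        is_hom_targets[OF c h_edge(1)[OF e]] is_hom_targets[OF m e] h_edge(2)[OF e] by metis
    show "hl C (snd h e) = hl L e"
      using is_hom_label[OF c h_edge(1)[OF e]] is_hom_label[OF m e] h_edge(2)[OF e] by simp
  qed (use C L h_node h_edge in auto)
  moreover have "hom_eq L (h ;; c) m"
    unfolding hom_eq_def comp_def using h_node h_edge by simp
  ultimately show ?thesis by blast
qed

lemma match_node_in_complement:
  assumes po: "is_pushout \<Sigma> K L' C S f k m' c"
    and interior: "\<And>u. u \<in> hV L' \<Longrightarrow> u \<notin> fst f ` hV K \<Longrightarrow>
                     in_degree L' u \<noteq> 0 \<and> out_degree L' u \<noteq> 0"
    and m: "is_hom \<Sigma> L S m"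
    and monogamous: "\<And>w. w \<in> hV S \<Longrightarrow> in_degree S w \<le> 1 \<and> out_degree S w \<le> 1"
    and disjoint: "\<And>e e'. e \<in> hE L \<Longrightarrow> e' \<in> hE L' \<Longrightarrow> snd m e \<noteq> snd m' e'"
    and v: "v \<in> hV L" and not_isolated: "in_degree L v \<noteq> 0 \<or> out_degree L v \<noteq> 0"
  shows "fst m v \<in> fst c ` hV C"
proof (rule ccontr)
  assume outside: "fst m v \<notin> fst c ` hV C"
  have m': "is_hom \<Sigma> L' S m'" and k: "is_hom \<Sigma> K C k" and comm: "hom_eq K (f ;; m') (k ;; c)"
    using po unfolding is_pushout_def by blast+
  have L: "hypergraph \<Sigma> L" and L': "hypergraph \<Sigma> L'" and S: "hypergraph \<Sigma> S"
    using m m' by (blast intro: is_hom_hypergraph_dom is_hom_hypergraph_cod)+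
  have w: "fst m v \<in> hV S" by (rule is_hom_node[OF m v])
  then obtain u where u: "u \<in> hV L'" "fst m v = fst m' u"
    using pushout_jointly_surjective(2)[OF po] outside by blast
  have "u \<notin> fst f ` hV K"
  proof
    assume "u \<in> fst f ` hV K"
    then obtain x where "x \<in> hV K" "u = fst f x" by blast
    then have "fst m v = fst c (fst k x)" "fst k x \<in> hV C"
      using u(2) comm is_hom_node[OF k] unfolding hom_eq_def comp_def by auto
    with outside show False by blast
  qed
  then obtain e2 e3 where e2: "e2 \<in> hE L'" "u \<in> set (ht L' e2)"
    and e3: "e3 \<in> hE L'" "u \<in> set (hs L' e3)"
    using interior[OF u(1)] unfolding in_degree_eq_0_iff[OF L'] out_degree_eq_0_iff[OF L'] by blast
  from not_isolated show False
  proof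
    assume "in_degree L v \<noteq> 0"
    then obtain e1 where e1: "e1 \<in> hE L" "v \<in> set (ht L e1)"
      unfolding in_degree_eq_0_iff[OF L] by blast
    have "2 \<le> in_degree S (fst m v)"
      using two_le_in_degree[OF S is_hom_edge[OF m e1(1)] is_hom_edge[OF m' e2(1)]
          disjoint[OF e1(1) e2(1)]]
        e1 e2 u(2) is_hom_targets[OF m e1(1)] is_hom_targets[OF m' e2(1)] by force
    with monogamous[OF w] show False by simp
  next
    assume "out_degree L v \<noteq> 0"
    then obtain e1 where e1: "e1 \<in> hE L" "v \<in> set (hs L e1)"
      unfolding out_degree_eq_0_iff[OF L] by blast
    have "2 \<le> out_degree S (fst m v)"
      using two_le_out_degree[OF S is_hom_edge[OF m e1(1)] is_hom_edge[OF m' e3(1)]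
          disjoint[OF e1(1) e3(1)]]
        e1 e3 u(2) is_hom_sources[OF m e1(1)] is_hom_sources[OF m' e3(1)] by force
    with monogamous[OF w] show False by simp
  qed
qed

lemma match_factors_through_complement:
  assumes po: "is_pushout \<Sigma> K L' C S f k m' c"
    and K: "hE K = {}" and f: "inj_on (fst f) (hV K)"
    and interior: "\<And>u. u \<in> hV L' \<Longrightarrow> u \<notin> fst f ` hV K \<Longrightarrow>
                     in_degree L' u \<noteq> 0 \<and> out_degree L' u \<noteq> 0"
    and m: "is_hom \<Sigma> L S m"
    and no_isolated: "\<And>v. v \<in> hV L \<Longrightarrow> in_degree L v \<noteq> 0 \<or> out_degree L v \<noteq> 0"
    and monogamous: "\<And>w. w \<in> hV S \<Longrightarrow> in_degree S w \<le> 1 \<and> out_degree S w \<le> 1"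
    and disjoint: "\<And>e e'. e \<in> hE L \<Longrightarrow> e' \<in> hE L' \<Longrightarrow> snd m e \<noteq> snd m' e'"
  shows "\<exists>h. is_hom \<Sigma> L C h \<and> hom_eq L (h ;; c) m"
proof (rule factor_through_node_injective)
  show "is_hom \<Sigma> C S c" using po unfolding is_pushout_def by blast
  show "inj_on (fst c) (hV C)" by (rule pushout_discrete_mono_inj_on_nodes[OF po K f])
  show "fst m ` hV L \<subseteq> fst c ` hV C"
    using match_node_in_complement[OF po interior m monogamous disjoint _ no_isolated] by blast
  show "snd m ` hE L \<subseteq> snd c ` hE C"
    using pushout_jointly_surjective(1)[OF po] is_hom_edge[OF m] disjoint by blast
qed (fact m)

lemma left_connected_rule_match_factors:
  assumes r: "left_connected_rule \<Sigma> \<rho>"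
    and po: "is_pushout \<Sigma> (rK \<rho>) (rL \<rho>) C S (rkL \<rho>) k m' c"
    and ma: "is_ma S"
    and r': "left_connected_rule \<Sigma> \<rho>'" and m: "is_hom \<Sigma> (rL \<rho>') S m"
    and disjoint: "\<And>e e'. e \<in> hE (rL \<rho>') \<Longrightarrow> e' \<in> hE (rL \<rho>) \<Longrightarrow> snd m e \<noteq> snd m' e'"
  shows "\<exists>h. is_hom \<Sigma> (rL \<rho>') C h \<and> hom_eq (rL \<rho>') (h ;; c) m"
proof (rule match_factors_through_complement[OF po _ _ _ m _ _ disjoint])
  show "hE (rK \<rho>) = {}" by (rule left_connected_rule_interface_discrete[OF r])
  show "inj_on (fst (rkL \<rho>)) (hV (rK \<rho>))" by (rule left_connected_rule_interface_inj[OF r])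
  show "in_degree (rL \<rho>) u \<noteq> 0 \<and> out_degree (rL \<rho>) u \<noteq> 0"
    if "u \<in> hV (rL \<rho>)" "u \<notin> fst (rkL \<rho>) ` hV (rK \<rho>)" for u
    by (rule left_connected_rule_interior_degrees[OF r that])
  show "in_degree (rL \<rho>') v \<noteq> 0 \<or> out_degree (rL \<rho>') v \<noteq> 0" if "v \<in> hV (rL \<rho>')" for v
    using strongly_connected_no_isolated_nodes[OF is_hom_hypergraph_dom[OF m] _ that] r'
    unfolding left_connected_rule_def by blast
  show "in_degree S w \<le> 1 \<and> out_degree S w \<le> 1" if "w \<in> hV S" for w
    using ma that unfolding is_ma_def by blast
qed

lemma parallel_iff_match_edges_disjoint:
  assumes r1: "left_connected_rule \<Sigma> \<rho>1" and r2: "left_connected_rule \<Sigma> \<rho>2"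
    and ma: "is_ma S"
    and po1: "is_pushout \<Sigma> (rK \<rho>1) (rL \<rho>1) C1 S (rkL \<rho>1) k1 m1 c1"
    and po2: "is_pushout \<Sigma> (rK \<rho>2) (rL \<rho>2) C2 S (rkL \<rho>2) k2 m2 c2"
  shows "parallel \<Sigma> (rL \<rho>1) m1 C1 c1 (rL \<rho>2) m2 C2 c2 \<longleftrightarrow>
         (\<forall>e1\<in>hE (rL \<rho>1). \<forall>e2\<in>hE (rL \<rho>2). snd m1 e1 \<noteq> snd m2 e2)"
proof
  assume "parallel \<Sigma> (rL \<rho>1) m1 C1 c1 (rL \<rho>2) m2 C2 c2"
  then obtain h1 where h1: "is_hom \<Sigma> (rL \<rho>1) C2 h1" "hom_eq (rL \<rho>1) (h1 ;; c2) m1"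
    unfolding parallel_def by blast
  show "\<forall>e1\<in>hE (rL \<rho>1). \<forall>e2\<in>hE (rL \<rho>2). snd m1 e1 \<noteq> snd m2 e2"
  proof (intro ballI)
    fix e1 e2 assume e1: "e1 \<in> hE (rL \<rho>1)" and e2: "e2 \<in> hE (rL \<rho>2)"
    have "snd m1 e1 = snd c2 (snd h1 e1)" using h1(2) e1 unfolding hom_eq_def comp_def by simp
    also have "\<dots> \<noteq> snd m2 e2"
      by (rule pushout_discrete_mono_edges_disjoint[OF po2
            left_connected_rule_interface_discrete[OF r2] left_connected_rule_interface_inj[OF r2]
            e2 is_hom_edge[OF h1(1) e1], symmetric])
    finally show "snd m1 e1 \<noteq> snd m2 e2" .
  qed
next
  assume disjoint: "\<forall>e1\<in>hE (rL \<rho>1). \<forall>e2\<in>hE (rL \<rho>2). snd m1 e1 \<noteq> snd m2 e2"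
  have m1: "is_hom \<Sigma> (rL \<rho>1) S m1" and m2: "is_hom \<Sigma> (rL \<rho>2) S m2"
    using po1 po2 unfolding is_pushout_def by blast+
  show "parallel \<Sigma> (rL \<rho>1) m1 C1 c1 (rL \<rho>2) m2 C2 c2"
    unfolding parallel_def
    using left_connected_rule_match_factors[OF r2 po2 ma r1 m1]
      left_connected_rule_match_factors[OF r1 po1 ma r2 m2] disjoint by metis
qed

lemma unglued_scheme_agrees_on_edges:
  assumes coprod: "is_coproduct \<Sigma> L1 L2 P \<iota>1 \<iota>2"
    and coeq: "is_coequaliser \<Sigma> G P g1 g2 S \<epsilon>"
    and inj1: "inj_on (snd (\<iota>1 ;; \<epsilon>)) (hE L1)" and inj2: "inj_on (snd (\<iota>2 ;; \<epsilon>)) (hE L2)"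
    and unglued: "\<not> (\<exists>e1\<in>hE L1. \<exists>e2\<in>hE L2.
        glued_edge G g1 g2 (snd \<iota>1 e1) (snd \<iota>2 e2) \<or>
        glued_edge G g1 g2 (snd \<iota>2 e2) (snd \<iota>1 e1))"
    and y: "y \<in> hE G"
  shows "snd g1 y = snd g2 y"
proof -
  have "snd g1 y \<in> hE P" "snd g2 y \<in> hE P"
    using coeq y is_hom_edge unfolding is_coequaliser_def by blast+
  then have ends: "snd g1 y \<in> snd \<iota>1 ` hE L1 \<union> snd \<iota>2 ` hE L2"
    "snd g2 y \<in> snd \<iota>1 ` hE L1 \<union> snd \<iota>2 ` hE L2"
    using coproduct_jointly_surjective(1)[OF coprod] by blast+
  have identified: "snd \<epsilon> (snd g1 y) = snd \<epsilon> (snd g2 y)"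
    using coeq y unfolding is_coequaliser_def hom_eq_def comp_def by simp
  have "\<not> (snd g1 y \<in> snd \<iota>1 ` hE L1 \<and> snd g2 y \<in> snd \<iota>2 ` hE L2)"
    "\<not> (snd g1 y \<in> snd \<iota>2 ` hE L2 \<and> snd g2 y \<in> snd \<iota>1 ` hE L1)"
    using unglued y unfolding glued_edge_def by blast+
  with ends consider
      a b where "a \<in> hE L1" "b \<in> hE L1" "snd g1 y = snd \<iota>1 a" "snd g2 y = snd \<iota>1 b"
    | a b where "a \<in> hE L2" "b \<in> hE L2" "snd g1 y = snd \<iota>2 a" "snd g2 y = snd \<iota>2 b"
    by blast
  then show ?thesis
  proof cases
    case 1
    with identified inj1 show ?thesis unfolding comp_def inj_on_def by fastforce
  next
    case 2
    with identified inj2 show ?thesis unfolding comp_def inj_on_def by fastforce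
  qed
qed

lemma gluing_match_edges_overlap_iff_glued:
  assumes coprod: "is_coproduct \<Sigma> L1 L2 P \<iota>1 \<iota>2"
    and coeq: "is_coequaliser \<Sigma> G P g1 g2 S \<epsilon>"
    and inj1: "inj_on (snd (\<iota>1 ;; \<epsilon>)) (hE L1)" and inj2: "inj_on (snd (\<iota>2 ;; \<epsilon>)) (hE L2)"
  shows "(\<exists>e1\<in>hE L1. \<exists>e2\<in>hE L2. snd (\<iota>1 ;; \<epsilon>) e1 = snd (\<iota>2 ;; \<epsilon>) e2) \<longleftrightarrow>
         (\<exists>e1\<in>hE L1. \<exists>e2\<in>hE L2.
            glued_edge G g1 g2 (snd \<iota>1 e1) (snd \<iota>2 e2) \<or>
            glued_edge G g1 g2 (snd \<iota>2 e2) (snd \<iota>1 e1))"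
    (is "?overlap \<longleftrightarrow> ?glued")
proof
  assume ?overlap
  then obtain e1 e2 where e: "e1 \<in> hE L1" "e2 \<in> hE L2" "snd \<epsilon> (snd \<iota>1 e1) = snd \<epsilon> (snd \<iota>2 e2)"
    unfolding comp_def by auto
  show ?glued
  proof (rule ccontr)
    assume "\<not> ?glued"
    then have "inj_on (snd \<epsilon>) (hE P)"
      using coequaliser_inj_on_edges[OF coeq]
        unglued_scheme_agrees_on_edges[OF coprod coeq inj1 inj2]
      by blast
    moreover have "snd \<iota>1 e1 \<in> hE P" "snd \<iota>2 e2 \<in> hE P"
      using coprod e is_hom_edge unfolding is_coproduct_def by blast+
    ultimately show False
      using e coproduct_edges_disjoint[OF coprod e(1,2)] unfolding inj_on_def by blast
  qed
next
  assume ?glued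
  moreover have "snd \<epsilon> (snd g1 y) = snd \<epsilon> (snd g2 y)" if "y \<in> hE G" for y
    using coeq that unfolding is_coequaliser_def hom_eq_def comp_def by simp
  ultimately show ?overlap unfolding glued_edge_def comp_def by force
qed

theorem mainTheorem5:
  fixes \<Sigma> :: "'x signature" and \<R> :: "'x rule set" and \<rho>1 \<rho>2 :: "'x rule"
    and P G S H1 H2 C1 C2 :: "'x hg"
    and \<iota>1 \<iota>2 g1 g2 \<epsilon> a1 b1 a2 b2 c1 c2 :: hom
  assumes sys: "left_connected_system \<Sigma> \<R>"
    and rules: "\<rho>1 \<in> \<R>" "\<rho>2 \<in> \<R>"
    and coprod: "is_coproduct \<Sigma> (rL \<rho>1) (rL \<rho>2) P \<iota>1 \<iota>2"
    and coeq: "is_coequaliser \<Sigma> G P g1 g2 S \<epsilon>"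
    and mono1: "is_mono \<Sigma> (rL \<rho>1) S (\<iota>1 ;; \<epsilon>)"
    and mono2: "is_mono \<Sigma> (rL \<rho>2) S (\<iota>2 ;; \<epsilon>)"
    and macosp: "ma_cospan \<Sigma> (discrete_on (in_nodes S) S) S (discrete_on (out_nodes S) S) incl incl"
    and der1: "derivation \<Sigma> \<rho>1 (discrete_on (in_nodes S) S) (discrete_on (out_nodes S) S)
                 S incl incl H1 a1 b1 (\<iota>1 ;; \<epsilon>) C1 c1"
    and der2: "derivation \<Sigma> \<rho>2 (discrete_on (in_nodes S) S) (discrete_on (out_nodes S) S)
                 S incl incl H2 a2 b2 (\<iota>2 ;; \<epsilon>) C2 c2"
  shows "\<not> parallel \<Sigma> (rL \<rho>1) (\<iota>1 ;; \<epsilon>) C1 c1 (rL \<rho>2) (\<iota>2 ;; \<epsilon>) C2 c2 \<longleftrightarrow>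
         (\<exists>e1\<in>hE (rL \<rho>1). \<exists>e2\<in>hE (rL \<rho>2).
            glued_edge G g1 g2 (snd \<iota>1 e1) (snd \<iota>2 e2) \<or>
            glued_edge G g1 g2 (snd \<iota>2 e2) (snd \<iota>1 e1))"
proof -
  have r1: "left_connected_rule \<Sigma> \<rho>1" and r2: "left_connected_rule \<Sigma> \<rho>2"
    using sys rules unfolding left_connected_system_def by auto
  obtain k1 where po1: "is_pushout \<Sigma> (rK \<rho>1) (rL \<rho>1) C1 S (rkL \<rho>1) k1 (\<iota>1 ;; \<epsilon>) c1"
    using der1 unfolding derivation_def by blast
  obtain k2 where po2: "is_pushout \<Sigma> (rK \<rho>2) (rL \<rho>2) C2 S (rkL \<rho>2) k2 (\<iota>2 ;; \<epsilon>) c2"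
    using der2 unfolding derivation_def by blast
  have ma: "is_ma S" using macosp unfolding ma_cospan_def by blast
  have inj1: "inj_on (snd (\<iota>1 ;; \<epsilon>)) (hE (rL \<rho>1))" and inj2: "inj_on (snd (\<iota>2 ;; \<epsilon>)) (hE (rL \<rho>2))"
    using mono1 mono2 unfolding is_mono_def by blast+
  show ?thesis
    using parallel_iff_match_edges_disjoint[OF r1 r2 ma po1 po2]
      gluing_match_edges_overlap_iff_glued[OF coprod coeq inj1 inj2] by blast
qed

end
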